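(* For $n\ge 2$, let $X = (x_1,\dots,x_n)$ with $x_i\ge 0$ for $i=1,\dots,n$, and let $\alpha = (\alpha_1,\dots,\alpha_n)$ satisfy $\alpha_i > 0$ and $\sum_{i=1}^n \alpha_i = 1$. Then for all $r\in (0,1]$ and all $s\in [1,\infty)$, $$\frac{1}{1-\alpha_{\min}}\operatorname{Var}_\alpha(X^{r/2})^{1/r} \le E_\alpha X - \Pi_\alpha X \le \frac{1}{\alpha_{\min}} \operatorname{Var}_\alpha(X^{s/2})^{1/s}.$$
   Context: Notation: for a vector $Y=(y_1,\dots,y_n)$ and weights $\alpha=(\alpha_1,\dots,\alpha_n)$ with $\alpha_i>0$, $\sum_i\alpha_i=1$, the weighted arithmetic mean is $E_\alpha(Y) := \sum_{i=1}^n \alpha_i y_i$, the weighted geometric mean is $\Pi_\alpha(Y) := \prod_{i=1}^n y_i^{\alpha_i}$, and the weighted variance is $\operatorname{Var}_\alpha(Y) = \sum_{i=1}^n \alpha_i \left(y_i - \sum_{k=1}^n \alpha_k y_k\right)^2 = \sum_{i=1}^n \alpha_i y_i^2 - \left(\sum_{k=1}^n \alpha_k y_k\right)^2$. Powers of vectors are taken coordinatewise, e.g. $X^{r/2} = (x_1^{r/2},\dots,x_n^{r/2})$. $\alpha_{\min}$ denotes the minimum of $\alpha_1,\dots,\alpha_n$. *)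

theory Defs
  imports "HOL-Analysis.Analysis"
begin

text \<open>Vectors of length n are functions on the index set {1..n}.\<close>

definition wmean :: "nat \<Rightarrow> (nat \<Rightarrow> real) \<Rightarrow> (nat \<Rightarrow> real) \<Rightarrow> real" where
  "wmean n a y = (\<Sum>i=1..n. a i * y i)"

definition wgeom :: "nat \<Rightarrow> (nat \<Rightarrow> real) \<Rightarrow> (nat \<Rightarrow> real) \<Rightarrow> real" where
  "wgeom n a y = (\<Prod>i=1..n. y i powr a i)"

definition wvar :: "nat \<Rightarrow> (nat \<Rightarrow> real) \<Rightarrow> (nat \<Rightarrow> real) \<Rightarrow> real" where
  "wvar n a y = (\<Sum>i=1..n. a i * (y i - wmean n a y)^2)"

definition vpow :: "(nat \<Rightarrow> real) \<Rightarrow> real \<Rightarrow> (nat \<Rightarrow> real)" where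
  "vpow x p = (\<lambda>i. x i powr p)"

definition amin :: "nat \<Rightarrow> (nat \<Rightarrow> real) \<Rightarrow> real" where
  "amin n a = Min (a ` {1..n})"

end

theory Submission
  imports Defs
begin

text \<open>
  Put \<open>y = sqrt X\<close>, so that \<open>E X - \<Pi> X = E (y^2) - (\<Pi> y)^2\<close> and \<open>Var (X^(1/2)) = E (y^2) - (E y)^2\<close>.
  The core estimate \<open>\<alpha>_min (E X - \<Pi> X) \<le> Var y \<le> (1 - \<alpha>_min) (E X - \<Pi> X)\<close> is proved by
  induction on the number of points: removing a point \<open>j\<close> at which \<open>y\<close> is extremal and
  renormalising the remaining weights splits both quantities into the same quantity on the
  remaining points plus a two-point term, and for two points with weights \<open>p, 1 - p\<close> the gap
  \<open>p u^2 + (1 - p) v^2 - (u^p v^(1-p))^2\<close> lies between \<open>min p (1 - p) (u - v)^2\<close> and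
  \<open>max p (1 - p) (u - v)^2\<close> by Bernoulli's inequality. The exponents are then moved:
  \<open>Var (y^r)^(1/r) \<le> Var y \<le> Var (y^s)^(1/s)\<close> for \<open>r \<le> 1 \<le> s\<close>, because the variance is the
  least mean squared deviation, \<open>|u^r - v^r| \<le> |u - v|^r\<close>, and the power mean inequality holds.
\<close>

lemma powr_le_Bernoulli:
  fixes t q :: real
  assumes "0 \<le> t" "0 \<le> q" "q \<le> 1"
  shows "t powr q \<le> 1 + q * (t - 1)"
  using Youngs_inequality_0[of q "1 - q" t 1] assms by (cases "t = 0") (auto simp: algebra_simps)

lemma Bernoulli_le_powr:
  fixes t q :: real
  assumes "0 \<le> t" "1 \<le> q"
  shows "1 + q * (t - 1) \<le> t powr q"
proof -
  have "(t powr q) powr (1/q) \<le> 1 + (1/q) * (t powr q - 1)"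
    using powr_le_Bernoulli[of "t powr q" "1/q"] assms by auto
  then show ?thesis using assms by (simp add: powr_powr field_simps)
qed

lemma powr_add_le_add_powr:
  fixes u v r :: real
  assumes "0 \<le> u" "0 \<le> v" "0 < r" "r \<le> 1"
  shows "(u + v) powr r \<le> u powr r + v powr r"
proof (cases "u + v = 0")
  case True
  then show ?thesis using assms by auto
next
  case False
  then have uv: "0 < u + v" using assms by auto
  have "u / (u + v) \<le> (u / (u + v)) powr r" "v / (u + v) \<le> (v / (u + v)) powr r"
    using powr_mono'[of r 1 "u / (u + v)"] powr_mono'[of r 1 "v / (u + v)"] assms uv by auto
  moreover have "u / (u + v) + v / (u + v) = 1"
    using uv by (simp add: add_divide_distrib[symmetric])
  ultimately have "1 \<le> (u powr r + v powr r) / (u + v) powr r"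
    by (simp add: powr_divide add_divide_distrib)
  then show ?thesis using uv by (simp add: divide_simps split: if_splits)
qed

lemma abs_powr_diff_le:
  fixes u v r :: real
  assumes "0 \<le> u" "0 \<le> v" "0 < r" "r \<le> 1"
  shows "\<bar>u powr r - v powr r\<bar> \<le> \<bar>u - v\<bar> powr r"
proof -
  have *: "\<bar>u powr r - v powr r\<bar> \<le> \<bar>u - v\<bar> powr r" if "0 \<le> v" "v \<le> u" for u v
    using powr_add_le_add_powr[of v "u - v" r] powr_mono2[of r v u] that assms by auto
  show ?thesis
    using *[of v u] *[of u v] assms by (cases "v \<le> u") (auto simp: abs_minus_commute)
qed

lemma abs_diff_powr_le:
  fixes u v s :: real
  assumes "0 \<le> u" "0 \<le> v" "1 \<le> s"
  shows "\<bar>u - v\<bar> powr s \<le> \<bar>u powr s - v powr s\<bar>"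
proof -
  have "\<bar>u - v\<bar> \<le> \<bar>u powr s - v powr s\<bar> powr (1/s)"
    using abs_powr_diff_le[of "u powr s" "v powr s" "1/s"] assms by (simp add: powr_powr)
  then have "\<bar>u - v\<bar> powr s \<le> (\<bar>u powr s - v powr s\<bar> powr (1/s)) powr s"
    using assms by (intro powr_mono2) auto
  then show ?thesis using assms by (simp add: powr_powr)
qed

lemma power2_abs_powr: "(\<bar>d\<bar> powr r)\<^sup>2 = (d\<^sup>2) powr r" for d r :: real
  by (simp add: power2_eq_square powr_mult[symmetric])

lemma power2_powr_mult_powr:
  fixes u v p :: real
  assumes "0 \<le> u" "0 < v"
  shows "(u powr p * v powr (1 - p))\<^sup>2 = v\<^sup>2 * (u / v) powr (2 * p)"
  using assms
  by (simp add: powr_divide power_mult_distrib power2_eq_square powr_add[symmetric] powr_diff field_simps)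

lemma two_point_gap_bounds_half:
  fixes u v p :: real
  assumes p: "0 < p" "p \<le> 1/2" and uv: "0 \<le> u" "0 \<le> v"
  defines "T \<equiv> p * u\<^sup>2 + (1 - p) * v\<^sup>2 - (u powr p * v powr (1 - p))\<^sup>2"
  shows "p * (u - v)\<^sup>2 \<le> T" "T \<le> (1 - p) * (u - v)\<^sup>2"
proof -
  have "(u powr p * v powr (1 - p))\<^sup>2 \<le> (1 - 2*p) * v\<^sup>2 + 2*p * u * v"
  proof (cases "v = 0")
    case True
    then show ?thesis using p uv by simp
  next
    case False
    then have v: "0 < v" using uv by simp
    have "(u powr p * v powr (1 - p))\<^sup>2 = v\<^sup>2 * (u / v) powr (2*p)"
      by (rule power2_powr_mult_powr[OF uv(1) v])
    also have "\<dots> \<le> v\<^sup>2 * (1 + 2*p * (u / v - 1))"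
      using p uv v by (intro mult_left_mono powr_le_Bernoulli) auto
    also have "\<dots> = (1 - 2*p) * v\<^sup>2 + 2*p * u * v"
      using v by (simp add: field_simps power2_eq_square)
    finally show ?thesis .
  qed
  then show "p * (u - v)\<^sup>2 \<le> T" unfolding T_def by (simp add: power2_eq_square algebra_simps)
  have "2*(1 - p) * u * v \<le> (u powr p * v powr (1 - p))\<^sup>2 + (1 - 2*p) * u\<^sup>2"
  proof (cases "u = 0")
    case True
    then show ?thesis by simp
  next
    case False
    then have u: "0 < u" using uv by simp
    have "2*(1 - p) * u * v = u\<^sup>2 * (1 + 2*(1 - p) * (v / u - 1)) + (1 - 2*p) * u\<^sup>2"
      using u by (simp add: field_simps power2_eq_square)
    also have "\<dots> \<le> u\<^sup>2 * (v / u) powr (2*(1 - p)) + (1 - 2*p) * u\<^sup>2"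
      using p uv u by (intro add_right_mono mult_left_mono Bernoulli_le_powr) auto
    also have "u\<^sup>2 * (v / u) powr (2*(1 - p)) = (u powr p * v powr (1 - p))\<^sup>2"
      using power2_powr_mult_powr[OF uv(2) u, of "1 - p"] by (simp add: mult.commute)
    finally show ?thesis by simp
  qed
  then show "T \<le> (1 - p) * (u - v)\<^sup>2" unfolding T_def by (simp add: power2_eq_square algebra_simps)
qed

lemma two_point_gap_bounds:
  fixes u v p :: real
  assumes p: "0 < p" "p < 1" and uv: "0 \<le> u" "0 \<le> v"
  defines "T \<equiv> p * u\<^sup>2 + (1 - p) * v\<^sup>2 - (u powr p * v powr (1 - p))\<^sup>2"
  shows "min p (1 - p) * (u - v)\<^sup>2 \<le> T" "T \<le> max p (1 - p) * (u - v)\<^sup>2"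
proof -
  have "min p (1 - p) * (u - v)\<^sup>2 \<le> T \<and> T \<le> max p (1 - p) * (u - v)\<^sup>2"
  proof (cases "p \<le> 1/2")
    case True
    then show ?thesis using two_point_gap_bounds_half[OF p(1) True uv] unfolding T_def by simp
  next
    case False
    then show ?thesis
      using two_point_gap_bounds_half[of "1 - p" v u] p uv unfolding T_def
      by (simp add: power2_commute mult.commute add.commute)
  qed
  then show "min p (1 - p) * (u - v)\<^sup>2 \<le> T" "T \<le> max p (1 - p) * (u - v)\<^sup>2" by auto
qed

lemma mult_two_point_gap_le:
  fixes u v p m :: real
  assumes "0 < p" "p < 1" "0 \<le> u" "0 \<le> v" "0 \<le> m" "m \<le> p" "m \<le> 1 - p"
  shows "m * (p * u\<^sup>2 + (1 - p) * v\<^sup>2 - (u powr p * v powr (1 - p))\<^sup>2) \<le> p * (1 - p) * (u - v)\<^sup>2"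
proof -
  have "m * max p (1 - p) \<le> p * (1 - p)"
    using assms by (cases "p \<le> 1 - p") (auto simp: max_def mult_right_mono mult.commute)
  have "m * (p * u\<^sup>2 + (1 - p) * v\<^sup>2 - (u powr p * v powr (1 - p))\<^sup>2) \<le> m * (max p (1 - p) * (u - v)\<^sup>2)"
    using assms by (intro mult_left_mono two_point_gap_bounds(2)) auto
  also have "\<dots> \<le> p * (1 - p) * (u - v)\<^sup>2"
    using mult_right_mono[OF \<open>m * max p (1 - p) \<le> p * (1 - p)\<close>, of "(u - v)\<^sup>2"] by simp
  finally show ?thesis .
qed

lemma two_point_gap_ge_mult:
  fixes u v p m :: real
  assumes "0 < p" "p < 1" "0 \<le> u" "0 \<le> v" "m \<le> p" "m \<le> 1 - p"
  shows "p * (1 - p) * (u - v)\<^sup>2 \<le> (1 - m) * (p * u\<^sup>2 + (1 - p) * v\<^sup>2 - (u powr p * v powr (1 - p))\<^sup>2)"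
proof -
  have "p * (1 - p) \<le> (1 - m) * min p (1 - p)"
    using assms by (cases "p \<le> 1 - p") (auto simp: min_def mult_left_mono mult_right_mono mult.commute)
  then have "p * (1 - p) * (u - v)\<^sup>2 \<le> (1 - m) * (min p (1 - p) * (u - v)\<^sup>2)"
    using mult_right_mono[of "p * (1 - p)" "(1 - m) * min p (1 - p)" "(u - v)\<^sup>2"] by (simp add: mult.assoc)
  also have "\<dots> \<le> (1 - m) * (p * u\<^sup>2 + (1 - p) * v\<^sup>2 - (u powr p * v powr (1 - p))\<^sup>2)"
    using assms by (intro mult_left_mono two_point_gap_bounds(1)) auto
  finally show ?thesis .
qed

definition mean_on :: "'a set \<Rightarrow> ('a \<Rightarrow> real) \<Rightarrow> ('a \<Rightarrow> real) \<Rightarrow> real" where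
  "mean_on S a y = (\<Sum>i\<in>S. a i * y i)"

definition geom_on :: "'a set \<Rightarrow> ('a \<Rightarrow> real) \<Rightarrow> ('a \<Rightarrow> real) \<Rightarrow> real" where
  "geom_on S a y = (\<Prod>i\<in>S. y i powr a i)"

definition var_on :: "'a set \<Rightarrow> ('a \<Rightarrow> real) \<Rightarrow> ('a \<Rightarrow> real) \<Rightarrow> real" where
  "var_on S a y = mean_on S a (\<lambda>i. (y i - mean_on S a y)\<^sup>2)"

definition amgm_gap :: "'a set \<Rightarrow> ('a \<Rightarrow> real) \<Rightarrow> ('a \<Rightarrow> real) \<Rightarrow> real" where
  "amgm_gap S a x = mean_on S a x - geom_on S a x"

lemma mean_on_nonneg:
  "(\<And>i. i \<in> S \<Longrightarrow> 0 \<le> a i) \<Longrightarrow> (\<And>i. i \<in> S \<Longrightarrow> 0 \<le> y i) \<Longrightarrow> 0 \<le> mean_on S a y"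
  unfolding mean_on_def by (auto intro: sum_nonneg)

lemma geom_on_nonneg: "0 \<le> geom_on S a y"
  unfolding geom_on_def by (simp add: prod_nonneg)

lemma mean_on_mono:
  "(\<And>i. i \<in> S \<Longrightarrow> 0 \<le> a i) \<Longrightarrow> (\<And>i. i \<in> S \<Longrightarrow> y i \<le> z i) \<Longrightarrow> mean_on S a y \<le> mean_on S a z"
  unfolding mean_on_def by (auto intro: sum_mono mult_left_mono)

lemma mean_on_const: "(\<Sum>i\<in>S. a i) = 1 \<Longrightarrow> mean_on S a (\<lambda>_. c) = c"
  unfolding mean_on_def by (simp add: sum_distrib_right[symmetric])

lemma mean_on_le:
  assumes "\<And>i. i \<in> S \<Longrightarrow> 0 \<le> a i" "(\<Sum>i\<in>S. a i) = 1" "\<And>i. i \<in> S \<Longrightarrow> y i \<le> c"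
  shows "mean_on S a y \<le> c"
  using mean_on_mono[of S a y "\<lambda>_. c"] mean_on_const[OF assms(2), of c] assms by simp

lemma mean_on_affine:
  "(\<Sum>i\<in>S. a i) = 1 \<Longrightarrow> mean_on S a (\<lambda>i. c * y i + d) = c * mean_on S a y + d"
  unfolding mean_on_def
  by (simp add: distrib_left sum.distrib mult.left_commute sum_distrib_left[symmetric] sum_distrib_right[symmetric])

lemma var_on_nonneg: "(\<And>i. i \<in> S \<Longrightarrow> 0 \<le> a i) \<Longrightarrow> 0 \<le> var_on S a y"
  unfolding var_on_def by (rule mean_on_nonneg) auto

lemma mean_on_sq_dev:
  assumes "finite S" "(\<Sum>i\<in>S. a i) = 1"
  shows "mean_on S a (\<lambda>i. (y i - c)\<^sup>2) = mean_on S a (\<lambda>i. (y i)\<^sup>2) - (mean_on S a y)\<^sup>2 + (mean_on S a y - c)\<^sup>2"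
proof -
  have "mean_on S a (\<lambda>i. (y i - c)\<^sup>2) = (\<Sum>i\<in>S. a i * (y i)\<^sup>2 - (2*c) * (a i * y i) + c\<^sup>2 * a i)"
    unfolding mean_on_def by (rule sum.cong) (simp_all add: power2_eq_square algebra_simps)
  also have "\<dots> = mean_on S a (\<lambda>i. (y i)\<^sup>2) - 2 * c * mean_on S a y + c\<^sup>2"
    using assms unfolding mean_on_def by (simp add: sum.distrib sum_subtractf sum_distrib_left[symmetric])
  finally show ?thesis by (simp add: power2_eq_square algebra_simps)
qed

lemma var_on_eq:
  "finite S \<Longrightarrow> (\<Sum>i\<in>S. a i) = 1 \<Longrightarrow> var_on S a y = mean_on S a (\<lambda>i. (y i)\<^sup>2) - (mean_on S a y)\<^sup>2"
  unfolding var_on_def by (simp add: mean_on_sq_dev)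

lemma var_on_le_mean_on_sq_dev:
  "finite S \<Longrightarrow> (\<Sum>i\<in>S. a i) = 1 \<Longrightarrow> var_on S a y \<le> mean_on S a (\<lambda>i. (y i - c)\<^sup>2)"
  unfolding var_on_def by (simp add: mean_on_sq_dev)

lemma mean_on_powr_le_powr_mean_on:
  assumes S: "finite S" and a: "\<And>i. i \<in> S \<Longrightarrow> 0 \<le> a i" "(\<Sum>i\<in>S. a i) = 1"
    and z: "\<And>i. i \<in> S \<Longrightarrow> 0 \<le> z i" and r: "0 < r" "r \<le> 1"
  shows "mean_on S a (\<lambda>i. z i powr r) \<le> mean_on S a z powr r"
proof (cases "mean_on S a z = 0")
  case True
  then have "\<forall>i\<in>S. a i * z i = 0"
    using sum_nonneg_eq_0_iff[of S "\<lambda>i. a i * z i"] S a z unfolding mean_on_def by auto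
  then have "mean_on S a (\<lambda>i. z i powr r) = 0"
    unfolding mean_on_def by (intro sum.neutral) auto
  then show ?thesis by simp
next
  case False
  define M where "M = mean_on S a z"
  have M: "0 < M" using False mean_on_nonneg[of S a z] a z unfolding M_def by fastforce
  have "z i powr r \<le> M powr r * (r / M) * z i + M powr r * (1 - r)" if "i \<in> S" for i
  proof -
    have "(z i / M) powr r \<le> r * (z i / M) + (1 - r)"
      using powr_le_Bernoulli[of "z i / M" r] r z that M by (simp add: algebra_simps)
    then have "M powr r * (z i / M) powr r \<le> M powr r * (r * (z i / M) + (1 - r))"
      by (rule mult_left_mono) simp
    then show ?thesis using M z that by (simp add: powr_divide algebra_simps)
  qed
  then have "mean_on S a (\<lambda>i. z i powr r) \<le> mean_on S a (\<lambda>i. M powr r * (r / M) * z i + M powr r * (1 - r))"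
    by (intro mean_on_mono) (use a(1) in auto)
  also have "\<dots> = M powr r * (r / M) * mean_on S a z + M powr r * (1 - r)"
    by (rule mean_on_affine[OF a(2)])
  also have "\<dots> = M powr r"
    using M unfolding M_def[symmetric] by (simp add: field_simps)
  finally show ?thesis unfolding M_def .
qed

lemma powr_mean_on_le_mean_on_powr:
  assumes S: "finite S" and a: "\<And>i. i \<in> S \<Longrightarrow> 0 \<le> a i" "(\<Sum>i\<in>S. a i) = 1"
    and z: "\<And>i. i \<in> S \<Longrightarrow> 0 \<le> z i" and s: "1 \<le> s"
  shows "mean_on S a z powr s \<le> mean_on S a (\<lambda>i. z i powr s)"
proof -
  have "mean_on S a (\<lambda>i. (z i powr s) powr (1/s)) \<le> mean_on S a (\<lambda>i. z i powr s) powr (1/s)"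
    using mean_on_powr_le_powr_mean_on[OF S a, of "\<lambda>i. z i powr s" "1/s"] s by auto
  moreover have "mean_on S a (\<lambda>i. (z i powr s) powr (1/s)) = mean_on S a z"
    unfolding mean_on_def using z s by (intro sum.cong) (auto simp: powr_powr)
  ultimately have "mean_on S a z powr s \<le> (mean_on S a (\<lambda>i. z i powr s) powr (1/s)) powr s"
    using mean_on_nonneg[of S a z] a z s by (intro powr_mono2) auto
  then show ?thesis using mean_on_nonneg[of S a "\<lambda>i. z i powr s"] a s by (simp add: powr_powr)
qed

lemma var_on_powr_le:
  assumes S: "finite S" and a: "\<And>i. i \<in> S \<Longrightarrow> 0 \<le> a i" "(\<Sum>i\<in>S. a i) = 1"
    and y: "\<And>i. i \<in> S \<Longrightarrow> 0 \<le> y i" and r: "0 < r" "r \<le> 1"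
  shows "var_on S a (\<lambda>i. y i powr r) powr (1/r) \<le> var_on S a y"
proof -
  define M where "M = mean_on S a y"
  have M: "0 \<le> M" unfolding M_def using a(1) y by (rule mean_on_nonneg)
  have "var_on S a (\<lambda>i. y i powr r) \<le> mean_on S a (\<lambda>i. (y i powr r - M powr r)\<^sup>2)"
    by (rule var_on_le_mean_on_sq_dev[OF S a(2)])
  also have "\<dots> \<le> mean_on S a (\<lambda>i. ((y i - M)\<^sup>2) powr r)"
  proof (rule mean_on_mono[OF a(1)])
    fix i assume "i \<in> S"
    then have "\<bar>y i powr r - M powr r\<bar>\<^sup>2 \<le> (\<bar>y i - M\<bar> powr r)\<^sup>2"
      using abs_powr_diff_le[of "y i" M r] y M r by (intro power_mono) auto
    then show "(y i powr r - M powr r)\<^sup>2 \<le> ((y i - M)\<^sup>2) powr r" by (simp add: power2_abs_powr)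
  qed
  also have "\<dots> \<le> var_on S a y powr r"
    unfolding var_on_def M_def using mean_on_powr_le_powr_mean_on[OF S a] r by simp
  finally have "var_on S a (\<lambda>i. y i powr r) powr (1/r) \<le> (var_on S a y powr r) powr (1/r)"
    using var_on_nonneg[OF a(1)] r by (intro powr_mono2) auto
  then show ?thesis using var_on_nonneg[of S a y, OF a(1)] r by (simp add: powr_powr)
qed

lemma var_on_le_var_on_powr:
  assumes S: "finite S" and a: "\<And>i. i \<in> S \<Longrightarrow> 0 \<le> a i" "(\<Sum>i\<in>S. a i) = 1"
    and y: "\<And>i. i \<in> S \<Longrightarrow> 0 \<le> y i" and s: "1 \<le> s"
  shows "var_on S a y \<le> var_on S a (\<lambda>i. y i powr s) powr (1/s)"
proof -
  define C where "C = mean_on S a (\<lambda>i. y i powr s)"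
  define d where "d = C powr (1/s)"
  have C: "0 \<le> C" unfolding C_def using a(1) by (rule mean_on_nonneg) auto
  have d: "0 \<le> d" "d powr s = C" unfolding d_def using C s by (simp_all add: powr_powr)
  have "var_on S a y powr s \<le> mean_on S a (\<lambda>i. (y i - d)\<^sup>2) powr s"
    using var_on_le_mean_on_sq_dev[OF S a(2)] var_on_nonneg[OF a(1)] s by (intro powr_mono2) auto
  also have "\<dots> \<le> mean_on S a (\<lambda>i. ((y i - d)\<^sup>2) powr s)"
    using powr_mean_on_le_mean_on_powr[OF S a] s by simp
  also have "\<dots> \<le> mean_on S a (\<lambda>i. (y i powr s - C)\<^sup>2)"
  proof (rule mean_on_mono[OF a(1)])
    fix i assume "i \<in> S"
    then have "(\<bar>y i - d\<bar> powr s)\<^sup>2 \<le> \<bar>y i powr s - d powr s\<bar>\<^sup>2"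
      using abs_diff_powr_le[of "y i" d s] y d s by (intro power_mono) auto
    then show "((y i - d)\<^sup>2) powr s \<le> (y i powr s - C)\<^sup>2" by (simp add: power2_abs_powr d(2))
  qed
  also have "\<dots> = var_on S a (\<lambda>i. y i powr s)" unfolding var_on_def C_def ..
  finally have "(var_on S a y powr s) powr (1/s) \<le> var_on S a (\<lambda>i. y i powr s) powr (1/s)"
    using var_on_nonneg[OF a(1)] s by (intro powr_mono2) auto
  then show ?thesis using var_on_nonneg[of S a y, OF a(1)] s by (simp add: powr_powr)
qed

lemma geom_on_le_mean_on:
  assumes S: "finite S" "S \<noteq> {}" and a: "\<And>i. i \<in> S \<Longrightarrow> 0 \<le> a i" "(\<Sum>i\<in>S. a i) = 1"
    and y: "\<And>i. i \<in> S \<Longrightarrow> 0 \<le> y i"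
  shows "geom_on S a y \<le> mean_on S a y"
proof (cases "\<exists>i\<in>S. y i = 0")
  case True
  then have "geom_on S a y = 0" unfolding geom_on_def using S by (auto simp: prod_zero_iff)
  then show ?thesis using mean_on_nonneg[of S a y] a y by simp
next
  case False
  then have y: "\<And>i. i \<in> S \<Longrightarrow> 0 < y i" using y by force
  have "(\<Sum>i\<in>S. a i * ln (y i)) \<le> ln (\<Sum>i\<in>S. a i *\<^sub>R y i)"
    using concave_on_sum[OF S ln_concave a(2)] a y by auto
  moreover have "0 < mean_on S a y"
  proof -
    obtain j where "j \<in> S" "a j \<noteq> 0"
      using a(2) by (metis sum.neutral zero_neq_one)
    then have "0 < a j * y j" using a y by (simp add: less_le)
    also have "\<dots> \<le> mean_on S a y"
      unfolding mean_on_def using \<open>j \<in> S\<close> S a y by (intro member_le_sum) (auto simp: less_imp_le)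
    finally show ?thesis .
  qed
  ultimately have "exp (\<Sum>i\<in>S. a i * ln (y i)) \<le> mean_on S a y"
    unfolding mean_on_def by (simp add: ln_ge_iff)
  moreover have "geom_on S a y = exp (\<Sum>i\<in>S. a i * ln (y i))"
    unfolding geom_on_def exp_sum[OF S(1)]
  proof (rule prod.cong)
    show "y i powr a i = exp (a i * ln (y i))" if "i \<in> S" for i
      using y[OF that] by (simp add: powr_def)
  qed simp
  ultimately show ?thesis by simp
qed

lemma le_geom_on:
  assumes "finite S" "\<And>i. i \<in> S \<Longrightarrow> 0 \<le> a i" "(\<Sum>i\<in>S. a i) = 1"
    "0 \<le> c" "\<And>i. i \<in> S \<Longrightarrow> c \<le> y i"
  shows "c \<le> geom_on S a y"
proof (cases "c = 0")
  case True
  then show ?thesis unfolding geom_on_def by (simp add: prod_nonneg)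
next
  case False
  have "(\<Prod>i\<in>S. c powr a i) \<le> geom_on S a y"
    unfolding geom_on_def using assms by (intro prod_mono) (auto intro: powr_mono2)
  moreover have "(\<Prod>i\<in>S. c powr a i) = c"
    using powr_sum[of c a S] assms False by simp
  ultimately show ?thesis by simp
qed

lemma geom_on_power2:
  "(\<And>i. i \<in> S \<Longrightarrow> 0 \<le> y i) \<Longrightarrow> geom_on S a (\<lambda>i. (y i)\<^sup>2) = (geom_on S a y)\<^sup>2"
  unfolding geom_on_def prod_power_distrib
  by (intro prod.cong) (auto simp: power2_eq_square powr_mult)

lemma amgm_gap_power2:
  "(\<And>i. i \<in> S \<Longrightarrow> 0 \<le> y i) \<Longrightarrow>
    amgm_gap S a (\<lambda>i. (y i)\<^sup>2) = mean_on S a (\<lambda>i. (y i)\<^sup>2) - (geom_on S a y)\<^sup>2"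
  unfolding amgm_gap_def by (simp add: geom_on_power2)

lemma amgm_gap_nonneg:
  assumes "finite S" "S \<noteq> {}" "\<And>i. i \<in> S \<Longrightarrow> 0 \<le> a i" "(\<Sum>i\<in>S. a i) = 1"
    "\<And>i. i \<in> S \<Longrightarrow> 0 \<le> x i"
  shows "0 \<le> amgm_gap S a x"
  using geom_on_le_mean_on[OF assms] unfolding amgm_gap_def by simp

definition pos_weights :: "'a set \<Rightarrow> ('a \<Rightarrow> real) \<Rightarrow> bool" where
  "pos_weights S a \<longleftrightarrow> finite S \<and> (\<forall>i\<in>S. 0 < a i) \<and> (\<Sum>i\<in>S. a i) = 1"

lemma pos_weights_remove_sum:
  assumes "pos_weights S a" "j \<in> S"
  shows "(\<Sum>i\<in>S - {j}. a i) = 1 - a j"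
  using assms sum.remove[of S j a] unfolding pos_weights_def by simp

lemma pos_weights_less_one:
  assumes "pos_weights S a" "j \<in> S" "S - {j} \<noteq> {}"
  shows "a j < 1"
  using sum_pos[of "S - {j}" a] pos_weights_remove_sum[OF assms(1,2)] assms
  unfolding pos_weights_def by auto

lemma pos_weights_remove:
  assumes "pos_weights S a" "j \<in> S" "S - {j} \<noteq> {}"
  shows "pos_weights (S - {j}) (\<lambda>i. a i / (1 - a j))"
  using pos_weights_less_one[OF assms] pos_weights_remove_sum[OF assms(1,2)] assms(1)
  unfolding pos_weights_def by (simp add: sum_divide_distrib[symmetric])

lemma Min_pos_weights_pos: "pos_weights S a \<Longrightarrow> S \<noteq> {} \<Longrightarrow> 0 < Min (a ` S)"
  unfolding pos_weights_def by simp

lemma Min_pos_weights_le_remove: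
  assumes "pos_weights S a" "j \<in> S" "S - {j} \<noteq> {}"
  shows "Min (a ` S) \<le> 1 - a j"
    and "Min (a ` S) \<le> Min ((\<lambda>i. a i / (1 - a j)) ` (S - {j}))"
proof -
  have fin: "finite S" and a: "\<And>i. i \<in> S \<Longrightarrow> 0 < a i" using assms(1) unfolding pos_weights_def by auto
  have w: "0 < 1 - a j" "1 - a j \<le> 1" using pos_weights_less_one[OF assms] a[OF assms(2)] by auto
  have "Min ((\<lambda>i. a i / (1 - a j)) ` (S - {j})) \<in> (\<lambda>i. a i / (1 - a j)) ` (S - {j})"
    using fin assms(3) by (intro Min_in) auto
  then obtain i where i: "i \<in> S - {j}" "Min ((\<lambda>i. a i / (1 - a j)) ` (S - {j})) = a i / (1 - a j)"
    by auto
  have m: "Min (a ` S) \<le> a i" using fin i(1) by simp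
  have "a i \<le> (\<Sum>i\<in>S - {j}. a i)"
    using i(1) fin a by (intro member_le_sum) (auto simp: less_imp_le)
  then show "Min (a ` S) \<le> 1 - a j" using m pos_weights_remove_sum[OF assms(1,2)] by simp
  have "a i \<le> a i / (1 - a j)" using w a[of i] i(1) by (simp add: le_divide_eq)
  then show "Min (a ` S) \<le> Min ((\<lambda>i. a i / (1 - a j)) ` (S - {j}))" using m i(2) by simp
qed

lemma pos_weights_remove_induct [consumes 2, case_names singleton remove]:
  assumes "pos_weights S a" "S \<noteq> {}"
    and singleton: "\<And>j a. pos_weights {j} a \<Longrightarrow> P {j} a"
    and remove: "\<And>S a. pos_weights S a \<Longrightarrow> (\<And>j. j \<in> S \<Longrightarrow> S - {j} \<noteq> {}) \<Longrightarrow>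
      (\<And>j. j \<in> S \<Longrightarrow> P (S - {j}) (\<lambda>i. a i / (1 - a j))) \<Longrightarrow> P S a"
  shows "P S a"
  using assms(1,2)
proof (induction "card S" arbitrary: S a rule: less_induct)
  case less
  have fin: "finite S" using less.prems(1) unfolding pos_weights_def by simp
  show ?case
  proof (cases "\<exists>j. S = {j}")
    case True
    then show ?thesis using singleton less.prems(1) by auto
  next
    case False
    then have S: "\<And>j. j \<in> S \<Longrightarrow> S - {j} \<noteq> {}" by auto
    show ?thesis
    proof (rule remove[OF less.prems(1) S])
      fix j assume "j \<in> S"
      then show "P (S - {j}) (\<lambda>i. a i / (1 - a j))"
        using less.hyps[OF card_Diff1_less[OF fin]] pos_weights_remove[OF less.prems(1)] S by blast
    qed
  qed
qed

lemma mean_on_remove: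
  assumes "finite S" "j \<in> S" "a j \<noteq> 1"
  shows "mean_on S a y = (1 - a j) * mean_on (S - {j}) (\<lambda>i. a i / (1 - a j)) y + a j * y j"
  using assms sum.remove[of S j "\<lambda>i. a i * y i"]
  unfolding mean_on_def by (simp add: sum_distrib_left)

lemma geom_on_remove:
  assumes "finite S" "j \<in> S" "a j \<noteq> 1"
  shows "geom_on S a y = y j powr a j * geom_on (S - {j}) (\<lambda>i. a i / (1 - a j)) y powr (1 - a j)"
  using assms prod.remove[of S j "\<lambda>i. y i powr a i"]
  unfolding geom_on_def prod_powr_distrib by (simp add: powr_powr)

lemma var_on_remove:
  assumes "finite S" "j \<in> S" "a j \<noteq> 1" "(\<Sum>i\<in>S. a i) = 1"
  defines "b \<equiv> \<lambda>i. a i / (1 - a j)"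
  shows "var_on S a y = (1 - a j) * var_on (S - {j}) b y + a j * (1 - a j) * (y j - mean_on (S - {j}) b y)\<^sup>2"
proof -
  have b: "(\<Sum>i\<in>S - {j}. b i) = 1"
    using assms sum.remove[of S j a] unfolding b_def by (simp add: sum_divide_distrib[symmetric])
  define A where "A = mean_on (S - {j}) b y"
  define Q where "Q = mean_on (S - {j}) b (\<lambda>i. (y i)\<^sup>2)"
  have "var_on S a y = ((1 - a j) * Q + a j * (y j)\<^sup>2) - ((1 - a j) * A + a j * y j)\<^sup>2"
    using var_on_eq[OF assms(1,4), of y] mean_on_remove[of S j a, OF assms(1-3)]
    unfolding A_def Q_def b_def by simp
  also have "\<dots> = (1 - a j) * (Q - A\<^sup>2) + a j * (1 - a j) * (y j - A)\<^sup>2"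
    by (simp add: power2_eq_square algebra_simps)
  also have "Q - A\<^sup>2 = var_on (S - {j}) b y"
    using var_on_eq[of "S - {j}" b y] b assms(1) unfolding A_def Q_def by simp
  finally show ?thesis unfolding A_def .
qed

lemma amgm_gap_power2_remove:
  assumes "finite S" "j \<in> S" "a j \<noteq> 1" "\<And>i. i \<in> S \<Longrightarrow> 0 \<le> y i"
  defines "b \<equiv> \<lambda>i. a i / (1 - a j)"
  defines "H \<equiv> geom_on (S - {j}) b y"
  shows "amgm_gap S a (\<lambda>i. (y i)\<^sup>2) = (1 - a j) * amgm_gap (S - {j}) b (\<lambda>i. (y i)\<^sup>2)
    + (a j * (y j)\<^sup>2 + (1 - a j) * H\<^sup>2 - (y j powr a j * H powr (1 - a j))\<^sup>2)"
proof -
  have y': "\<And>i. i \<in> S - {j} \<Longrightarrow> 0 \<le> y i" using assms(4) by auto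
  have "amgm_gap S a (\<lambda>i. (y i)\<^sup>2) = mean_on S a (\<lambda>i. (y i)\<^sup>2) - (geom_on S a y)\<^sup>2"
    using amgm_gap_power2[of S y a, OF assms(4)] .
  also have "\<dots> = ((1 - a j) * mean_on (S - {j}) b (\<lambda>i. (y i)\<^sup>2) + a j * (y j)\<^sup>2)
      - (y j powr a j * H powr (1 - a j))\<^sup>2"
    using mean_on_remove[of S j a, OF assms(1-3)] geom_on_remove[of S j a y, OF assms(1-3)]
    unfolding H_def b_def by simp
  also have "mean_on (S - {j}) b (\<lambda>i. (y i)\<^sup>2) = amgm_gap (S - {j}) b (\<lambda>i. (y i)\<^sup>2) + H\<^sup>2"
    using amgm_gap_power2[of "S - {j}" y b, OF y'] unfolding H_def by simp
  finally show ?thesis by (simp add: algebra_simps)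
qed

lemma singleton_amgm_gap_power2:
  assumes "pos_weights {j} a" "0 \<le> y j"
  shows "amgm_gap {j} a (\<lambda>i. (y i)\<^sup>2) = 0" "var_on {j} a y = 0"
  using assms unfolding pos_weights_def amgm_gap_def var_on_def mean_on_def geom_on_def by auto

lemma Min_mult_amgm_gap_le_var_on:
  assumes "pos_weights S a" "S \<noteq> {}" "\<And>i. i \<in> S \<Longrightarrow> 0 \<le> y i"
  shows "Min (a ` S) * amgm_gap S a (\<lambda>i. (y i)\<^sup>2) \<le> var_on S a y"
  using assms
proof (induction S a rule: pos_weights_remove_induct)
  case (singleton j a)
  then show ?case using singleton_amgm_gap_power2[of j a y] by simp
next
  case (remove S a)
  have fin: "finite S" and "S \<noteq> {}" using remove(1) unfolding pos_weights_def by auto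
  then have "Min (y ` S) \<in> y ` S" by (intro Min_in) auto
  then obtain j where j: "j \<in> S" "y j = Min (y ` S)" by auto
  have y_min: "\<And>i. i \<in> S \<Longrightarrow> y j \<le> y i" using fin j(2) by simp
  \<comment> \<open>With \<open>y j\<close> minimal, \<open>y j \<le> H \<le> A\<close> below, so \<open>(y j - A)\<^sup>2\<close> dominates the two-point distance.\<close>
  define p w b S' where "p = a j" and "w = 1 - a j" and "b = (\<lambda>i. a i / (1 - a j))" and "S' = S - {j}"
  define m H A where "m = Min (a ` S)" and "H = geom_on S' b y" and "A = mean_on S' b y"
  define T where "T = p * (y j)\<^sup>2 + w * H\<^sup>2 - (y j powr p * H powr w)\<^sup>2"
  have S': "S' \<noteq> {}" using remove(2)[OF j(1)] unfolding S'_def .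
  have b': "finite S'" "\<And>i. i \<in> S' \<Longrightarrow> 0 \<le> b i" "(\<Sum>i\<in>S'. b i) = 1"
    using pos_weights_remove[OF remove(1) j(1)] S' unfolding b_def S'_def pos_weights_def
    by (auto simp: less_imp_le)
  have y': "\<And>i. i \<in> S' \<Longrightarrow> 0 \<le> y i" using remove.prems unfolding S'_def by auto
  have aj: "0 < a j" "a j < 1" using pos_weights_less_one[OF remove(1) j(1)] S' remove(1) j(1)
    unfolding S'_def pos_weights_def by auto
  have m: "0 < m" "m \<le> p" "m \<le> w" "m \<le> Min (b ` S')"
    using Min_pos_weights_pos[OF remove(1) \<open>S \<noteq> {}\<close>] Min_pos_weights_le_remove[OF remove(1) j(1)] S' fin j(1)
    unfolding m_def p_def w_def b_def S'_def by auto
  have "m * amgm_gap S' b (\<lambda>i. (y i)\<^sup>2) \<le> Min (b ` S') * amgm_gap S' b (\<lambda>i. (y i)\<^sup>2)"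
    using amgm_gap_nonneg[OF b'(1) S' b'(2,3)] m(4) by (intro mult_right_mono) auto
  also have "\<dots> \<le> var_on S' b y"
    using remove(3)[OF j(1)] y' unfolding b_def S'_def by simp
  finally have gap': "m * amgm_gap S' b (\<lambda>i. (y i)\<^sup>2) \<le> var_on S' b y" .
  have "y j \<le> H"
    unfolding H_def
    by (rule le_geom_on[OF b'(1-3)]) (use y_min remove.prems[OF j(1)] in \<open>auto simp: S'_def\<close>)
  moreover have "H \<le> A"
    unfolding H_def A_def by (rule geom_on_le_mean_on[OF b'(1) S' b'(2,3) y'])
  ultimately have "(y j - H)\<^sup>2 \<le> (y j - A)\<^sup>2" by (simp add: power2_commute power_mono)
  have "m * T \<le> p * w * (y j - H)\<^sup>2"
    using mult_two_point_gap_le[of p "y j" H m] aj m remove.prems[OF j(1)] geom_on_nonneg[of S' b y]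
    unfolding T_def p_def w_def H_def by simp
  also have "\<dots> \<le> p * w * (y j - A)\<^sup>2"
    using \<open>(y j - H)\<^sup>2 \<le> (y j - A)\<^sup>2\<close> aj unfolding p_def w_def by (intro mult_left_mono) auto
  finally have two_point: "m * T \<le> p * w * (y j - A)\<^sup>2" .
  have "amgm_gap S a (\<lambda>i. (y i)\<^sup>2) = w * amgm_gap S' b (\<lambda>i. (y i)\<^sup>2) + T"
    unfolding p_def w_def b_def S'_def H_def T_def
    by (rule amgm_gap_power2_remove[of S j a y, OF fin j(1) _ remove.prems]) (use aj in simp)
  then have "m * amgm_gap S a (\<lambda>i. (y i)\<^sup>2) = w * (m * amgm_gap S' b (\<lambda>i. (y i)\<^sup>2)) + m * T"
    by (simp add: algebra_simps)
  also have "\<dots> \<le> w * var_on S' b y + p * w * (y j - A)\<^sup>2"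
    using gap' two_point aj unfolding w_def by (intro add_mono mult_left_mono) auto
  also have "\<dots> = var_on S a y"
    using var_on_remove[of S j a y, OF fin j(1)] remove(1) aj
    unfolding p_def w_def b_def S'_def A_def pos_weights_def by (simp add: mult.commute)
  finally show ?case unfolding m_def .
qed

lemma var_on_le_one_minus_Min_mult_amgm_gap:
  assumes "pos_weights S a" "S \<noteq> {}" "\<And>i. i \<in> S \<Longrightarrow> 0 \<le> y i"
  shows "var_on S a y \<le> (1 - Min (a ` S)) * amgm_gap S a (\<lambda>i. (y i)\<^sup>2)"
  using assms
proof (induction S a rule: pos_weights_remove_induct)
  case (singleton j a)
  then show ?case using singleton_amgm_gap_power2[of j a y] by simp
next
  case (remove S a)
  have fin: "finite S" and "S \<noteq> {}" using remove(1) unfolding pos_weights_def by auto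
  then have "Max (y ` S) \<in> y ` S" by (intro Max_in) auto
  then obtain j where j: "j \<in> S" "y j = Max (y ` S)" by auto
  have y_max: "\<And>i. i \<in> S \<Longrightarrow> y i \<le> y j" using fin j(2) by simp
  \<comment> \<open>With \<open>y j\<close> maximal, \<open>H \<le> A \<le> y j\<close> below, so the two-point distance dominates \<open>(y j - A)\<^sup>2\<close>.\<close>
  define p w b S' where "p = a j" and "w = 1 - a j" and "b = (\<lambda>i. a i / (1 - a j))" and "S' = S - {j}"
  define m H A where "m = Min (a ` S)" and "H = geom_on S' b y" and "A = mean_on S' b y"
  define T where "T = p * (y j)\<^sup>2 + w * H\<^sup>2 - (y j powr p * H powr w)\<^sup>2"
  have S': "S' \<noteq> {}" using remove(2)[OF j(1)] unfolding S'_def .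
  have b': "finite S'" "\<And>i. i \<in> S' \<Longrightarrow> 0 \<le> b i" "(\<Sum>i\<in>S'. b i) = 1"
    using pos_weights_remove[OF remove(1) j(1)] S' unfolding b_def S'_def pos_weights_def
    by (auto simp: less_imp_le)
  have y': "\<And>i. i \<in> S' \<Longrightarrow> 0 \<le> y i" using remove.prems unfolding S'_def by auto
  have aj: "0 < a j" "a j < 1" using pos_weights_less_one[OF remove(1) j(1)] S' remove(1) j(1)
    unfolding S'_def pos_weights_def by auto
  have m: "m \<le> p" "m \<le> w" "m \<le> Min (b ` S')"
    using Min_pos_weights_le_remove[OF remove(1) j(1)] S' fin j(1)
    unfolding m_def p_def w_def b_def S'_def by auto
  have "var_on S' b y \<le> (1 - Min (b ` S')) * amgm_gap S' b (\<lambda>i. (y i)\<^sup>2)"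
    using remove(3)[OF j(1)] y' unfolding b_def S'_def by simp
  also have "\<dots> \<le> (1 - m) * amgm_gap S' b (\<lambda>i. (y i)\<^sup>2)"
    using amgm_gap_nonneg[OF b'(1) S' b'(2,3)] m(3) by (intro mult_right_mono) auto
  finally have var': "var_on S' b y \<le> (1 - m) * amgm_gap S' b (\<lambda>i. (y i)\<^sup>2)" .
  have "0 \<le> H" unfolding H_def by (rule geom_on_nonneg)
  moreover have "H \<le> A"
    unfolding H_def A_def by (rule geom_on_le_mean_on[OF b'(1) S' b'(2,3) y'])
  moreover have "A \<le> y j"
    unfolding A_def by (rule mean_on_le[OF b'(2,3)]) (use y_max in \<open>auto simp: S'_def\<close>)
  ultimately have "p * w * (y j - A)\<^sup>2 \<le> p * w * (y j - H)\<^sup>2"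
    using aj unfolding p_def w_def by (intro mult_left_mono power_mono) auto
  also have "\<dots> \<le> (1 - m) * T"
    using two_point_gap_ge_mult[of p "y j" H m] aj m remove.prems[OF j(1)] \<open>0 \<le> H\<close>
    unfolding T_def p_def w_def by simp
  finally have two_point: "p * w * (y j - A)\<^sup>2 \<le> (1 - m) * T" .
  have "var_on S a y = w * var_on S' b y + p * w * (y j - A)\<^sup>2"
    using var_on_remove[of S j a y, OF fin j(1)] remove(1) aj
    unfolding p_def w_def b_def S'_def A_def pos_weights_def by (simp add: mult.commute)
  also have "\<dots> \<le> w * ((1 - m) * amgm_gap S' b (\<lambda>i. (y i)\<^sup>2)) + (1 - m) * T"
    using var' two_point aj unfolding w_def by (intro add_mono mult_left_mono) auto
  also have "\<dots> = (1 - m) * (w * amgm_gap S' b (\<lambda>i. (y i)\<^sup>2) + T)"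
    by (simp add: algebra_simps)
  also have "w * amgm_gap S' b (\<lambda>i. (y i)\<^sup>2) + T = amgm_gap S a (\<lambda>i. (y i)\<^sup>2)"
    unfolding p_def w_def b_def S'_def H_def T_def
    by (rule amgm_gap_power2_remove[of S j a y, OF fin j(1) _ remove.prems, symmetric]) (use aj in simp)
  finally show ?case unfolding m_def .
qed

theorem theorem2p4:
  fixes n :: nat and x a :: "nat \<Rightarrow> real" and r s :: real
  assumes "n \<ge> 2"
    and "\<And>i. i \<in> {1..n} \<Longrightarrow> x i \<ge> 0"
    and "\<And>i. i \<in> {1..n} \<Longrightarrow> a i > 0"
    and "(\<Sum>i=1..n. a i) = 1"
    and "0 < r" and "r \<le> 1"
    and "1 \<le> s"
  shows "(1 / (1 - amin n a)) * wvar n a (vpow x (r/2)) powr (1/r)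
           \<le> wmean n a x - wgeom n a x \<and>
         wmean n a x - wgeom n a x
           \<le> (1 / amin n a) * wvar n a (vpow x (s/2)) powr (1/s)"
proof -
  define S y m where "S = {1..n}" and "y = vpow x (1/2)" and "m = Min (a ` S)"
  have a: "pos_weights S a" using assms(3,4) unfolding pos_weights_def S_def by auto
  then have a0: "finite S" "\<And>i. i \<in> S \<Longrightarrow> 0 \<le> a i" "(\<Sum>i\<in>S. a i) = 1"
    unfolding pos_weights_def by auto
  have "1 \<in> S" "2 \<in> S - {1}" using assms(1) unfolding S_def by auto
  then have S: "S \<noteq> {}" "1 \<in> S" "S - {1} \<noteq> {}" by auto
  have y: "\<And>i. i \<in> S \<Longrightarrow> 0 \<le> y i" unfolding y_def vpow_def by simp
  have xy: "\<And>i. i \<in> S \<Longrightarrow> (y i)\<^sup>2 = x i"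
    using assms(2) unfolding S_def y_def vpow_def by (simp add: powr_half_sqrt)
  have "wmean n a x - wgeom n a x = amgm_gap S a (\<lambda>i. (y i)\<^sup>2)"
    unfolding amgm_gap_def mean_on_def geom_on_def wmean_def wgeom_def S_def[symmetric]
    by (simp add: xy cong: sum.cong prod.cong)
  moreover have "\<And>t. wvar n a (vpow x (t/2)) = var_on S a (\<lambda>i. y i powr t)"
    unfolding wvar_def wmean_def var_on_def mean_on_def S_def y_def vpow_def by (simp add: powr_powr)
  moreover have "amin n a = m" unfolding amin_def m_def S_def ..
  moreover have "0 < m" "m < 1"
    using Min_pos_weights_pos[OF a S(1)] Min_pos_weights_le_remove(1)[OF a S(2,3)] a S(2)
    unfolding m_def pos_weights_def by auto
  moreover have "var_on S a (\<lambda>i. y i powr r) powr (1/r) \<le> (1 - m) * amgm_gap S a (\<lambda>i. (y i)\<^sup>2)"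
    using var_on_powr_le[of S a y r, OF a0 y assms(5,6)]
      var_on_le_one_minus_Min_mult_amgm_gap[of S a y, OF a S(1) y]
    unfolding m_def by linarith
  moreover have "m * amgm_gap S a (\<lambda>i. (y i)\<^sup>2) \<le> var_on S a (\<lambda>i. y i powr s) powr (1/s)"
    using var_on_le_var_on_powr[of S a y s, OF a0 y assms(7)]
      Min_mult_amgm_gap_le_var_on[of S a y, OF a S(1) y]
    unfolding m_def by linarith
  ultimately show ?thesis by (simp add: field_simps)
qed

end
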